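(* Let $H$ be a binary tree based graph, $M$ a pseudomatching of $H$, and $S$ a set of literals with $Vars(S)=V(H)\setminus\bigcup M$ that is $1$-comfortable w.r.t. $M$. Then for every $S'\in{\bf EC}(S)$, $\Pr(\{S'\})=(1/2)^{|V(H)\setminus Fix(S)|}$.
   Context: Sets of literals never contain a variable together with its negation; $Vars(S)$ is the set of variables occurring in $S$. A rooted tree is extended if none of its leaves has a sibling. A graph $H$ is a binary tree based graph if it is the edge-disjoint union of extended rooted trees $T_1,\dots,T_m$ with roots $t_1,\dots,t_m$ such that every leaf of some $T_i$ is a leaf of exactly two of the trees, and any two trees have at most one common vertex, which is a leaf of both. Vertices are root vertices, leaf vertices, and internal vertices (the rest); two internal vertices are siblings if they are siblings in the tree containing them. $T_i,T_j$ are adjacent if they share a leaf $\ell_{i,j}$; $P_{i,j}$ is the path between $t_i$ and $t_j$ in $T_i\cup T_j$. A pseudoedge is a pair $\{t_i,t_j\}$ with $T_i,T_j$ adjacent; a pseudomatching is a set of pairwise disjoint pseudoedges; $\bigcup M$ is the set of their ends. $\phi_H$ is the CNF on variables $V(H)$ with a clause $C_{i,j}$ (positive literals of $V(P_{i,j})$) for each pseudoedge. $S$ falsifies a clause if all its variables occur negatively in $S$. $S$ respects $\{t_i,t_j\}$ if all non-root variables of $C_{i,j}$ occur negatively in $S$ and the siblings of all internal variables of $C_{i,j}$ occur positively in $S$. $S$ is $1$-comfortable w.r.t. $M$ if it falsifies no clause of $\phi_H$ and respects every pseudoedge of $M$. The positive literal $\ell_{i,j}$ is fixed w.r.t. a set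 $S$ of literals if $\ell_{i,j}\in S$ and all other variables of $C_{i,j}$ occur negatively in $S$; $Fix(S)$ is the set of fixed literals. ${\bf SAT}(H)$ is the set of satisfying assignments of $\phi_H$; each $S'\in{\bf SAT}(H)$ has probability $(1/2)^{|V(H)\setminus Fix(S')|}$. ${\bf EC}(S)=\{S'\in{\bf SAT}(H):S\subseteq S'\}$. *)

theory Defs
  imports Complex_Main
begin

record 'v rtree =
  tverts :: "'v set"
  troot  :: 'v
  tpar   :: "'v \<Rightarrow> 'v"

definition rooted_tree :: "'v rtree \<Rightarrow> bool" where
  "rooted_tree T \<longleftrightarrow> finite (tverts T) \<and> troot T \<in> tverts T \<and>
     (\<forall>v \<in> tverts T - {troot T}. tpar T v \<in> tverts T) \<and>
     (\<forall>v \<in> tverts T. \<exists>n. (tpar T ^^ n) v = troot T)"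

definition tedges :: "'v rtree \<Rightarrow> 'v set set" where
  "tedges T = {{v, tpar T v} | v. v \<in> tverts T - {troot T}}"

definition tchildren :: "'v rtree \<Rightarrow> 'v \<Rightarrow> 'v set" where
  "tchildren T u = {v \<in> tverts T - {troot T}. tpar T v = u}"

definition tleaves :: "'v rtree \<Rightarrow> 'v set" where
  "tleaves T = {v \<in> tverts T - {troot T}. tchildren T v = {}}"

definition tsiblings :: "'v rtree \<Rightarrow> 'v \<Rightarrow> 'v \<Rightarrow> bool" where
  "tsiblings T u v \<longleftrightarrow> u \<in> tverts T - {troot T} \<and> v \<in> tverts T - {troot T} \<and>
     u \<noteq> v \<and> tpar T u = tpar T v"

definition extended_tree :: "'v rtree \<Rightarrow> bool" where
  "extended_tree T \<longleftrightarrow> rooted_tree T \<and> (\<forall>l \<in> tleaves T. \<forall>u. \<not> tsiblings T l u)"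

definition rpath :: "'v rtree \<Rightarrow> 'v \<Rightarrow> 'v set" where
  "rpath T v = {u. \<exists>k. u = (tpar T ^^ k) v \<and> (\<forall>l<k. (tpar T ^^ l) v \<noteq> troot T)}"

section \<open>Binary tree based graphs, given by their decomposition T 0, ..., T (m-1)\<close>

definition btb_graph :: "nat \<Rightarrow> (nat \<Rightarrow> 'v rtree) \<Rightarrow> bool" where
  "btb_graph m T \<longleftrightarrow>
     (\<forall>i<m. extended_tree (T i)) \<and>
     (\<forall>i<m. \<forall>j<m. i \<noteq> j \<longrightarrow> tedges (T i) \<inter> tedges (T j) = {}) \<and>
     (\<forall>i<m. \<forall>l \<in> tleaves (T i). card {j. j < m \<and> l \<in> tleaves (T j)} = 2) \<and>
     (\<forall>i<m. \<forall>j<m. i \<noteq> j \<longrightarrow>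
        card (tverts (T i) \<inter> tverts (T j)) \<le> 1 \<and>
        tverts (T i) \<inter> tverts (T j) \<subseteq> tleaves (T i) \<inter> tleaves (T j))"

definition HV :: "nat \<Rightarrow> (nat \<Rightarrow> 'v rtree) \<Rightarrow> 'v set" where
  "HV m T = (\<Union>i<m. tverts (T i))"

definition is_root :: "nat \<Rightarrow> (nat \<Rightarrow> 'v rtree) \<Rightarrow> 'v \<Rightarrow> bool" where
  "is_root m T v \<longleftrightarrow> (\<exists>i<m. v = troot (T i))"

definition is_leaf :: "nat \<Rightarrow> (nat \<Rightarrow> 'v rtree) \<Rightarrow> 'v \<Rightarrow> bool" where
  "is_leaf m T v \<longleftrightarrow> (\<exists>i<m. v \<in> tleaves (T i))"

definition is_internal :: "nat \<Rightarrow> (nat \<Rightarrow> 'v rtree) \<Rightarrow> 'v \<Rightarrow> bool" where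
  "is_internal m T v \<longleftrightarrow> v \<in> HV m T \<and> \<not> is_root m T v \<and> \<not> is_leaf m T v"

definition siblings :: "nat \<Rightarrow> (nat \<Rightarrow> 'v rtree) \<Rightarrow> 'v \<Rightarrow> 'v \<Rightarrow> bool" where
  "siblings m T u v \<longleftrightarrow> is_internal m T u \<and> is_internal m T v \<and>
     (\<exists>i<m. tsiblings (T i) u v)"

definition adjacent :: "nat \<Rightarrow> (nat \<Rightarrow> 'v rtree) \<Rightarrow> nat \<Rightarrow> nat \<Rightarrow> bool" where
  "adjacent m T i j \<longleftrightarrow> i < m \<and> j < m \<and> i \<noteq> j \<and>
     (\<exists>l. l \<in> tleaves (T i) \<and> l \<in> tleaves (T j))"

definition cleaf :: "(nat \<Rightarrow> 'v rtree) \<Rightarrow> nat \<Rightarrow> nat \<Rightarrow> 'v" where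
  "cleaf T i j = (THE l. l \<in> tleaves (T i) \<and> l \<in> tleaves (T j))"

text \<open>V(P_{i,j}): vertices of the path between t_i and t_j in T_i \<union> T_j (through l_{i,j})\<close>
definition Pvars :: "(nat \<Rightarrow> 'v rtree) \<Rightarrow> nat \<Rightarrow> nat \<Rightarrow> 'v set" where
  "Pvars T i j = rpath (T i) (cleaf T i j) \<union> rpath (T j) (cleaf T i j)"

definition pseudoedges :: "nat \<Rightarrow> (nat \<Rightarrow> 'v rtree) \<Rightarrow> 'v set set" where
  "pseudoedges m T = {{troot (T i), troot (T j)} | i j. adjacent m T i j}"

definition pseudomatching :: "nat \<Rightarrow> (nat \<Rightarrow> 'v rtree) \<Rightarrow> 'v set set \<Rightarrow> bool" where
  "pseudomatching m T M \<longleftrightarrow> M \<subseteq> pseudoedges m T \<and>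
     (\<forall>e\<in>M. \<forall>f\<in>M. e \<noteq> f \<longrightarrow> e \<inter> f = {})"

text \<open>the clauses of phi_H, each given by its (positive) variable set\<close>
definition clauses :: "nat \<Rightarrow> (nat \<Rightarrow> 'v rtree) \<Rightarrow> 'v set set" where
  "clauses m T = {Pvars T i j | i j. adjacent m T i j}"

type_synonym 'v lit = "'v \<times> bool"

definition consistent :: "'v lit set \<Rightarrow> bool" where
  "consistent S \<longleftrightarrow> (\<forall>v. \<not> ((v, True) \<in> S \<and> (v, False) \<in> S))"

definition Vars :: "'v lit set \<Rightarrow> 'v set" where
  "Vars S = fst ` S"

definition falsifies :: "'v lit set \<Rightarrow> 'v set \<Rightarrow> bool" where
  "falsifies S C \<longleftrightarrow> (\<forall>v\<in>C. (v, False) \<in> S)"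

definition respects_pe :: "nat \<Rightarrow> (nat \<Rightarrow> 'v rtree) \<Rightarrow> 'v lit set \<Rightarrow> 'v set \<Rightarrow> bool" where
  "respects_pe m T S e \<longleftrightarrow> (\<forall>i j. adjacent m T i j \<and> e = {troot (T i), troot (T j)} \<longrightarrow>
     (\<forall>v \<in> Pvars T i j. \<not> is_root m T v \<longrightarrow> (v, False) \<in> S) \<and>
     (\<forall>v \<in> Pvars T i j. is_internal m T v \<longrightarrow> (\<forall>u. siblings m T u v \<longrightarrow> (u, True) \<in> S)))"

definition comfortable1 :: "nat \<Rightarrow> (nat \<Rightarrow> 'v rtree) \<Rightarrow> 'v set set \<Rightarrow> 'v lit set \<Rightarrow> bool" where
  "comfortable1 m T M S \<longleftrightarrow> (\<forall>C \<in> clauses m T. \<not> falsifies S C) \<and> (\<forall>e\<in>M. respects_pe m T S e)"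

definition Fix :: "nat \<Rightarrow> (nat \<Rightarrow> 'v rtree) \<Rightarrow> 'v lit set \<Rightarrow> 'v lit set" where
  "Fix m T S = {(cleaf T i j, True) | i j. adjacent m T i j \<and> (cleaf T i j, True) \<in> S \<and>
       (\<forall>v \<in> Pvars T i j - {cleaf T i j}. (v, False) \<in> S)}"

definition SAT :: "nat \<Rightarrow> (nat \<Rightarrow> 'v rtree) \<Rightarrow> 'v lit set set" where
  "SAT m T = {S'. consistent S' \<and> Vars S' = HV m T \<and>
     (\<forall>C \<in> clauses m T. \<exists>v\<in>C. (v, True) \<in> S')}"

definition EC :: "nat \<Rightarrow> (nat \<Rightarrow> 'v rtree) \<Rightarrow> 'v lit set \<Rightarrow> 'v lit set set" where
  "EC m T S = {S' \<in> SAT m T. S \<subseteq> S'}"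

definition weight :: "nat \<Rightarrow> (nat \<Rightarrow> 'v rtree) \<Rightarrow> 'v lit set \<Rightarrow> real" where
  "weight m T S' = (1/2) ^ card (HV m T - Vars (Fix m T S'))"

definition Pr :: "nat \<Rightarrow> (nat \<Rightarrow> 'v rtree) \<Rightarrow> 'v lit set set \<Rightarrow> real" where
  "Pr m T A = (\<Sum>S'\<in>A \<inter> SAT m T. weight m T S')"

end

theory Submission imports Defs begin

text \<open>The weight of a satisfying assignment \<open>S'\<close> only depends on \<open>Fix(S')\<close>, so it suffices to
show \<open>Fix(S') = Fix(S)\<close> for every \<open>S' \<supseteq> S\<close>. If \<open>S'\<close> fixes the leaf of a clause \<open>C\<^sub>i\<^sub>,\<^sub>j\<close>
that has a variable outside \<open>Vars(S)\<close>, that variable is a root \<open>t\<^sub>i\<close> of a pseudoedge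
\<open>{t\<^sub>i, t\<^sub>k} \<in> M\<close> respected by \<open>S\<close>. For \<open>k = j\<close> the leaf \<open>\<ell>\<^sub>i\<^sub>,\<^sub>j\<close> is negative in \<open>S\<close>; for \<open>k \<noteq> j\<close>
the paths from \<open>t\<^sub>i\<close> to \<open>\<ell>\<^sub>i\<^sub>,\<^sub>j\<close> and to \<open>\<ell>\<^sub>i\<^sub>,\<^sub>k\<close> split at two siblings, and respecting
\<open>{t\<^sub>i, t\<^sub>k}\<close> makes the one on the path to \<open>\<ell>\<^sub>i\<^sub>,\<^sub>j\<close> positive. Either way \<open>S'\<close> does not fix
\<open>\<ell>\<^sub>i\<^sub>,\<^sub>j\<close>, so every clause fixed by \<open>S'\<close> is already decided, and fixed, by \<open>S\<close>.\<close>

definition fixes_clause :: "(nat \<Rightarrow> 'v rtree) \<Rightarrow> 'v lit set \<Rightarrow> nat \<Rightarrow> nat \<Rightarrow> bool" where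
  "fixes_clause T S i j \<longleftrightarrow> (cleaf T i j, True) \<in> S \<and>
     (\<forall>v \<in> Pvars T i j - {cleaf T i j}. (v, False) \<in> S)"

lemma Fix_eq_fixes_clause:
  "Fix m T S = {(cleaf T i j, True) | i j. adjacent m T i j \<and> fixes_clause T S i j}"
  unfolding Fix_def fixes_clause_def by blast

lemma rpath_memI: "(tpar T ^^ k) v = u \<Longrightarrow> \<forall>l<k. (tpar T ^^ l) v \<noteq> troot T \<Longrightarrow> u \<in> rpath T v"
  unfolding rpath_def by auto

lemma self_in_rpath: "v \<in> rpath T v"
  by (rule rpath_memI[where k=0]) simp_all

lemma rpath_subset_tverts:
  assumes "rooted_tree T" "v \<in> tverts T"
  shows "rpath T v \<subseteq> tverts T"
proof
  fix u assume "u \<in> rpath T v"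
  then obtain k where u: "u = (tpar T ^^ k) v" and below: "\<forall>l<k. (tpar T ^^ l) v \<noteq> troot T"
    unfolding rpath_def by blast
  have "(tpar T ^^ k') v \<in> tverts T" if "k' \<le> k" for k'
    using that
  proof (induction k')
    case 0
    then show ?case using assms by simp
  next
    case (Suc k')
    then have "(tpar T ^^ k') v \<in> tverts T - {troot T}" using below by auto
    then show ?case using assms(1) unfolding rooted_tree_def by auto
  qed
  then show "u \<in> tverts T" using u by blast
qed

lemma troot_in_rpath:
  assumes "rooted_tree T" "v \<in> tverts T"
  shows "troot T \<in> rpath T v"
proof -
  obtain n where n: "(tpar T ^^ n) v = troot T" using assms unfolding rooted_tree_def by blast
  let ?k = "LEAST n. (tpar T ^^ n) v = troot T"
  have "(tpar T ^^ ?k) v = troot T" by (rule LeastI[of _ n]) (rule n)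
  moreover have "\<forall>l<?k. (tpar T ^^ l) v \<noteq> troot T" using not_less_Least by blast
  ultimately show ?thesis by (rule rpath_memI)
qed

lemma rpath_leaf_eq:
  assumes T: "rooted_tree T" and w: "w \<in> tverts T" and "v \<in> tleaves T" "v \<in> rpath T w"
  shows "v = w"
proof -
  obtain n where n: "v = (tpar T ^^ n) w" and below: "\<forall>l<n. (tpar T ^^ l) w \<noteq> troot T"
    using assms(4) unfolding rpath_def by blast
  show ?thesis
  proof (cases n)
    case (Suc n')
    have "(tpar T ^^ n') w \<in> rpath T w" by (rule rpath_memI[OF refl]) (use below Suc in auto)
    then have "(tpar T ^^ n') w \<in> tverts T" using rpath_subset_tverts[OF T w] by blast
    then have "(tpar T ^^ n') w \<in> tchildren T v"
      using n below Suc unfolding tchildren_def by auto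
    then show ?thesis using assms(3) unfolding tleaves_def by auto
  qed (use n in simp)
qed

text \<open>The path from \<open>l\<^sub>1\<close> leaves the path from \<open>l\<^sub>2\<close> for good at the first step that lands on it;
the vertex before that step and the vertex of the other path just below the landing point are
siblings.\<close>

lemma rpaths_of_leaves_meet_at_siblings:
  assumes T: "rooted_tree T" and l1: "l1 \<in> tleaves T" and l2: "l2 \<in> tleaves T"
    and "l1 \<noteq> l2"
  obtains x y where "x \<in> rpath T l1" "y \<in> rpath T l2" "tsiblings T x y"
proof -
  let ?p = "tpar T" and ?q = "rpath T l2"
  have l1v: "l1 \<in> tverts T" and l2v: "l2 \<in> tverts T" using l1 l2 unfolding tleaves_def by auto
  have root_q: "troot T \<in> ?q" using troot_in_rpath[OF T l2v] .
  obtain n where "(?p ^^ n) l1 = troot T" using T l1v unfolding rooted_tree_def by blast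
  define k where "k = (LEAST k. (?p ^^ k) l1 \<in> ?q)"
  have k_q: "(?p ^^ k) l1 \<in> ?q" unfolding k_def
    by (rule LeastI[of _ n]) (simp add: \<open>(?p ^^ n) l1 = troot T\<close> root_q)
  have below_k: "\<forall>l<k. (?p ^^ l) l1 \<notin> ?q" unfolding k_def using not_less_Least by blast
  have "k \<noteq> 0" using k_q rpath_leaf_eq[OF T l2v l1] \<open>l1 \<noteq> l2\<close> by (cases k) auto
  then obtain k' where k': "k = Suc k'" by (cases k) auto
  let ?x = "(?p ^^ k') l1"
  have x: "?x \<in> rpath T l1" by (rule rpath_memI[OF refl]) (use below_k root_q k' less_SucI in metis)
  have x_q: "?x \<notin> ?q" using below_k k' by auto
  have xv: "?x \<in> tverts T - {troot T}" using rpath_subset_tverts[OF T l1v] x x_q root_q by auto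
  obtain n where pn: "?p ?x = (?p ^^ n) l2" and below_n: "\<forall>l<n. (?p ^^ l) l2 \<noteq> troot T"
    using k_q k' unfolding rpath_def by auto
  have "n \<noteq> 0"
  proof
    assume "n = 0"
    then have "?x \<in> tchildren T l2" using pn xv unfolding tchildren_def by auto
    then show False using l2 unfolding tleaves_def by auto
  qed
  then obtain n' where n': "n = Suc n'" by (cases n) auto
  let ?y = "(?p ^^ n') l2"
  have y: "?y \<in> ?q" unfolding rpath_def using below_n n' by auto
  have "?y \<in> tverts T - {troot T}" using rpath_subset_tverts[OF T l2v] y below_n n' by auto
  with xv x_q y pn n' have "tsiblings T ?x ?y" unfolding tsiblings_def by auto
  with x y show ?thesis by (rule that)
qed

lemma btb_graph_extended_tree: "btb_graph m T \<Longrightarrow> i < m \<Longrightarrow> extended_tree (T i)"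
  unfolding btb_graph_def by auto

lemma btb_graph_rooted_tree: "btb_graph m T \<Longrightarrow> i < m \<Longrightarrow> rooted_tree (T i)"
  using btb_graph_extended_tree unfolding extended_tree_def by auto

lemma btb_graph_card_common_tverts:
  "btb_graph m T \<Longrightarrow> i < m \<Longrightarrow> j < m \<Longrightarrow> i \<noteq> j \<Longrightarrow> card (tverts (T i) \<inter> tverts (T j)) \<le> 1"
  unfolding btb_graph_def by auto

lemma btb_graph_card_leaf_trees:
  "btb_graph m T \<Longrightarrow> i < m \<Longrightarrow> l \<in> tleaves (T i) \<Longrightarrow> card {j. j < m \<and> l \<in> tleaves (T j)} = 2"
  unfolding btb_graph_def by auto

lemma btb_graph_shared_vertex_leaf:
  assumes "btb_graph m T" "i < m" "j < m" "i \<noteq> j" "v \<in> tverts (T i)" "v \<in> tverts (T j)"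
  shows "v \<in> tleaves (T i)" "v \<in> tleaves (T j)"
  using assms unfolding btb_graph_def by blast+

lemma btb_graph_troot_eq:
  assumes "btb_graph m T" "a < m" "i < m" "v \<in> tverts (T i)" "v = troot (T a)"
  shows "a = i"
proof (rule ccontr)
  assume "a \<noteq> i"
  have "v \<in> tverts (T a)"
    using btb_graph_rooted_tree[OF assms(1,2)] assms(5) unfolding rooted_tree_def by auto
  then have "v \<in> tleaves (T a)"
    using btb_graph_shared_vertex_leaf[OF assms(1,2,3) \<open>a \<noteq> i\<close>] assms(4) by auto
  then show False using assms(5) unfolding tleaves_def by auto
qed

lemma btb_graph_not_is_root:
  assumes "btb_graph m T" "i < m" "v \<in> tverts (T i)" "v \<noteq> troot (T i)"
  shows "\<not> is_root m T v"
  using btb_graph_troot_eq[OF assms(1) _ assms(2,3)] assms(4) unfolding is_root_def by blast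

lemma tsiblings_is_internal:
  assumes g: "btb_graph m T" and i: "i < m" and s: "tsiblings (T i) x y"
  shows "is_internal m T x"
proof -
  have xv: "x \<in> tverts (T i)" "x \<noteq> troot (T i)" using s unfolding tsiblings_def by auto
  have "\<not> is_leaf m T x"
  proof
    assume "is_leaf m T x"
    then obtain a where a: "a < m" "x \<in> tleaves (T a)" unfolding is_leaf_def by auto
    then have "x \<in> tleaves (T i)"
      using btb_graph_shared_vertex_leaf[OF g a(1) i _ _ xv(1)] unfolding tleaves_def by blast
    then show False using btb_graph_extended_tree[OF g i] s unfolding extended_tree_def by auto
  qed
  then show ?thesis
    using btb_graph_not_is_root[OF g i xv] xv i unfolding is_internal_def HV_def by auto
qed

lemma tsiblings_siblings:
  assumes "btb_graph m T" "i < m" "tsiblings (T i) x y"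
  shows "siblings m T x y"
proof -
  have "tsiblings (T i) y x" using assms(3) unfolding tsiblings_def by auto
  then show ?thesis
    using assms tsiblings_is_internal[OF assms(1,2)] unfolding siblings_def by blast
qed

lemma adjacent_sym: "adjacent m T i j \<Longrightarrow> adjacent m T j i"
  unfolding adjacent_def by auto

lemma cleaf_sym: "cleaf T i j = cleaf T j i"
  unfolding cleaf_def by (simp add: conj_commute)

lemma Pvars_sym: "Pvars T i j = Pvars T j i"
  unfolding Pvars_def cleaf_sym[of T i j] by auto

lemma fixes_clause_sym: "fixes_clause T S i j = fixes_clause T S j i"
  unfolding fixes_clause_def by (simp add: cleaf_sym[of T i j] Pvars_sym[of T i j])

lemma cleaf_in_tleaves:
  assumes g: "btb_graph m T" and a: "adjacent m T i j"
  shows "cleaf T i j \<in> tleaves (T i)" "cleaf T i j \<in> tleaves (T j)"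
proof -
  obtain l where l: "l \<in> tleaves (T i)" "l \<in> tleaves (T j)" using a unfolding adjacent_def by auto
  have ij: "i < m" "j < m" "i \<noteq> j" using a unfolding adjacent_def by auto
  have fin: "finite (tverts (T i) \<inter> tverts (T j))"
    using btb_graph_rooted_tree[OF g ij(1)] unfolding rooted_tree_def by blast
  have unique: "l' = l" if "l' \<in> tleaves (T i)" "l' \<in> tleaves (T j)" for l'
  proof (rule ccontr)
    assume "l' \<noteq> l"
    have "{l, l'} \<subseteq> tverts (T i) \<inter> tverts (T j)" using that l unfolding tleaves_def by blast
    then have "card {l, l'} \<le> 1"
      using card_mono[OF fin] btb_graph_card_common_tverts[OF g ij] le_trans by blast
    with \<open>l' \<noteq> l\<close> show False by simp
  qed
  have "cleaf T i j = l" unfolding cleaf_def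
    by (rule the_equality) (use l unique in blast)+
  with l show "cleaf T i j \<in> tleaves (T i)" "cleaf T i j \<in> tleaves (T j)" by simp_all
qed

lemma cleaf_in_Pvars: "cleaf T i j \<in> Pvars T i j"
  unfolding Pvars_def using self_in_rpath by auto

lemma Pvars_subset_tverts:
  assumes g: "btb_graph m T" and a: "adjacent m T i j"
  shows "Pvars T i j \<subseteq> tverts (T i) \<union> tverts (T j)"
proof -
  have "i < m" "j < m" using a unfolding adjacent_def by auto
  moreover have "cleaf T i j \<in> tverts (T i)" "cleaf T i j \<in> tverts (T j)"
    using cleaf_in_tleaves[OF g a] unfolding tleaves_def by auto
  ultimately show ?thesis
    unfolding Pvars_def using rpath_subset_tverts btb_graph_rooted_tree[OF g] by (meson Un_mono)
qed

lemma cleaf_not_is_root: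
  assumes "btb_graph m T" "adjacent m T i j"
  shows "\<not> is_root m T (cleaf T i j)"
proof -
  have "i < m" using assms(2) unfolding adjacent_def by simp
  moreover have "cleaf T i j \<in> tverts (T i) - {troot (T i)}"
    using cleaf_in_tleaves(1)[OF assms] unfolding tleaves_def by simp
  ultimately show ?thesis using btb_graph_not_is_root[OF assms(1)] by blast
qed

lemma cleaf_inj:
  assumes g: "btb_graph m T" and "adjacent m T i j" "adjacent m T i k" "j \<noteq> k"
  shows "cleaf T i j \<noteq> cleaf T i k"
proof
  assume eq: "cleaf T i j = cleaf T i k"
  let ?A = "{a. a < m \<and> cleaf T i j \<in> tleaves (T a)}"
  have "{i, j, k} \<subseteq> ?A"
    using cleaf_in_tleaves[OF g assms(2)] cleaf_in_tleaves[OF g assms(3)] assms(2,3) eq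
    unfolding adjacent_def by auto
  then have "card {i, j, k} \<le> card ?A" by (intro card_mono) auto
  moreover have "card ?A = 2"
    using btb_graph_card_leaf_trees[OF g _ cleaf_in_tleaves(1)[OF g assms(2)]] assms(2)
    unfolding adjacent_def by blast
  moreover have "card {i, j, k} = 3" using assms unfolding adjacent_def by auto
  ultimately show False by simp
qed

lemma respects_pe_not_fixes_clause:
  assumes g: "btb_graph m T" and ij: "adjacent m T i j" and ik: "adjacent m T i k"
    and r: "respects_pe m T S {troot (T i), troot (T k)}"
    and "S \<subseteq> S'" and "consistent S'"
  shows "\<not> fixes_clause T S' i j"
proof
  assume fix_ij: "fixes_clause T S' i j"
  have i: "i < m" using ij unfolding adjacent_def by auto
  have neg: "\<And>v. v \<in> Pvars T i k \<Longrightarrow> \<not> is_root m T v \<Longrightarrow> (v, False) \<in> S'"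
    and sib: "\<And>u v. v \<in> Pvars T i k \<Longrightarrow> is_internal m T v \<Longrightarrow> siblings m T u v \<Longrightarrow> (u, True) \<in> S'"
    using r ik \<open>S \<subseteq> S'\<close> unfolding respects_pe_def by blast+
  show False
  proof (cases "k = j")
    case True
    then have "(cleaf T i j, False) \<in> S'" using neg cleaf_in_Pvars cleaf_not_is_root[OF g ij] by blast
    then show False using fix_ij \<open>consistent S'\<close> unfolding fixes_clause_def consistent_def by blast
  next
    case False
    obtain x y where x: "x \<in> rpath (T i) (cleaf T i j)" and y: "y \<in> rpath (T i) (cleaf T i k)"
      and xy: "tsiblings (T i) x y"
      using rpaths_of_leaves_meet_at_siblings[OF btb_graph_rooted_tree[OF g i]
          cleaf_in_tleaves(1)[OF g ij] cleaf_in_tleaves(1)[OF g ik]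
          cleaf_inj[OF g ij ik False[symmetric]]] .
    have yx: "tsiblings (T i) y x" using xy unfolding tsiblings_def by auto
    have "y \<in> Pvars T i k" using y unfolding Pvars_def by auto
    then have "(x, True) \<in> S'"
      using sib tsiblings_is_internal[OF g i yx] tsiblings_siblings[OF g i xy] by blast
    moreover have "x \<noteq> cleaf T i j"
      using btb_graph_extended_tree[OF g i] cleaf_in_tleaves(1)[OF g ij] xy
      unfolding extended_tree_def by auto
    moreover have "x \<in> Pvars T i j" using x unfolding Pvars_def by auto
    ultimately show False
      using fix_ij \<open>consistent S'\<close> unfolding fixes_clause_def consistent_def by blast
  qed
qed

lemma pseudomatching_Union_troot:
  assumes "pseudomatching m T M" "v \<in> \<Union>M"
  obtains a b where "adjacent m T a b" "v = troot (T a)" "{troot (T a), troot (T b)} \<in> M"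
proof -
  obtain a b where ab: "adjacent m T a b" "{troot (T a), troot (T b)} \<in> M" "v \<in> {troot (T a), troot (T b)}"
    using assms unfolding pseudomatching_def pseudoedges_def by blast
  then show ?thesis
    using that[OF ab(1) _ ab(2)] that[OF adjacent_sym[OF ab(1)]] by (auto simp: insert_commute)
qed

lemma fixes_clause_Pvars_subset_Vars:
  assumes g: "btb_graph m T" and pm: "pseudomatching m T M"
    and vars: "Vars S = HV m T - \<Union>M" and comf: "comfortable1 m T M S"
    and "S \<subseteq> S'" "consistent S'"
    and ij: "adjacent m T i j" and fix_ij: "fixes_clause T S' i j"
  shows "Pvars T i j \<subseteq> Vars S"
proof
  fix v assume v: "v \<in> Pvars T i j"
  show "v \<in> Vars S"
  proof (rule ccontr)
    assume "v \<notin> Vars S"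
    have ijm: "i < m" "j < m" using ij unfolding adjacent_def by auto
    have vij: "v \<in> tverts (T i) \<union> tverts (T j)" using Pvars_subset_tverts[OF g ij] v by auto
    then have "v \<in> \<Union>M" using vars \<open>v \<notin> Vars S\<close> ijm unfolding HV_def by auto
    then obtain a b where ab: "adjacent m T a b" "v = troot (T a)" "{troot (T a), troot (T b)} \<in> M"
      using pseudomatching_Union_troot[OF pm] by blast
    have r: "respects_pe m T S {troot (T a), troot (T b)}"
      using comf ab(3) unfolding comfortable1_def by blast
    have "a < m" using ab(1) unfolding adjacent_def by auto
    then have "a = i \<or> a = j" using vij btb_graph_troot_eq[OF g] ijm ab(2) by blast
    then show False
      using respects_pe_not_fixes_clause[OF g _ ab(1) r \<open>S \<subseteq> S'\<close> \<open>consistent S'\<close>]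
        ij adjacent_sym[OF ij] fix_ij fixes_clause_sym by metis
  qed
qed

lemma consistent_subset_lit:
  assumes "S \<subseteq> S'" "consistent S'" "v \<in> Vars S" "(v, b) \<in> S'"
  shows "(v, b) \<in> S"
proof -
  obtain b' where "(v, b') \<in> S" using assms(3) unfolding Vars_def by force
  moreover have "b' = b"
    using calculation assms(1,2,4) unfolding consistent_def by (cases b; cases b') auto
  ultimately show ?thesis by simp
qed

lemma fixes_clause_subset:
  assumes "S \<subseteq> S'" "consistent S'" "Pvars T i j \<subseteq> Vars S" "fixes_clause T S' i j"
  shows "fixes_clause T S i j"
  using assms consistent_subset_lit[OF assms(1,2)] cleaf_in_Pvars
  unfolding fixes_clause_def by blast

theorem lemma12:
  fixes m :: nat and T :: "nat \<Rightarrow> 'v rtree" and M :: "'v set set" and S :: "'v lit set"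
  assumes "btb_graph m T"
    and "pseudomatching m T M"
    and "consistent S"
    and "Vars S = HV m T - \<Union>M"
    and "comfortable1 m T M S"
  shows "\<forall>S' \<in> EC m T S. Pr m T {S'} = (1/2) ^ card (HV m T - Vars (Fix m T S))"
proof
  fix S' assume "S' \<in> EC m T S"
  then have sub: "S \<subseteq> S'" and sat: "S' \<in> SAT m T" unfolding EC_def by auto
  then have cons: "consistent S'" unfolding SAT_def by auto
  have "fixes_clause T S' i j \<longleftrightarrow> fixes_clause T S i j" if "adjacent m T i j" for i j
    using fixes_clause_subset[OF sub cons] fixes_clause_Pvars_subset_Vars[OF assms(1,2,4,5) sub cons that]
      sub unfolding fixes_clause_def by blast
  then have "Fix m T S' = Fix m T S" unfolding Fix_eq_fixes_clause by blast
  moreover have "{S'} \<inter> SAT m T = {S'}" using sat by auto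
  ultimately show "Pr m T {S'} = (1/2) ^ card (HV m T - Vars (Fix m T S))"
    unfolding Pr_def weight_def by simp
qed

end
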